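(* Let $n\ge2$ and $(s_1,\dots,s_{n-1},p)\in\mathbb C^n$ with $|p|\ne1$, and let $Q=\left(\frac{s_1-\bar s_{n-1}p}{1-|p|^2},\frac{s_2-\bar s_{n-2}p}{1-|p|^2},\dots,\frac{s_{n-1}-\bar s_1p}{1-|p|^2}\right)\in\mathbb C^{n-1}$. Then $(s_1,\dots,s_{n-1},p)\in\mathbb G_n$ if and only if $(s_1,\dots,s_{n-1},p)\in\widetilde{\mathbb G}_n$ and $Q\in\mathbb G_{n-1}$.
   Context: $\mathbb D$ is the open unit disc. For $m\ge1$, $\pi_m:\mathbb C^m\to\mathbb C^m$ maps $z$ to $(s_1(z),\dots,s_{m-1}(z),z_1\cdots z_m)$, $s_i$ the elementary symmetric polynomials; $\mathbb G_m=\pi_m(\mathbb D^m)$ (so $\mathbb G_1=\mathbb D$). $\widetilde{\mathbb G}_n=\{(y_1,\dots,y_{n-1},q)\in\mathbb C^n: q\in\mathbb D,\ y_j=\beta_j+\bar\beta_{n-j}q$ for some $\beta_j\in\mathbb C$ with $|\beta_j|+|\beta_{n-j}|<\binom{n}{j}$, $j=1,\dots,n-1\}$. *)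

theory Defs
  imports "HOL-Analysis.Analysis"
begin

text \<open>Points of C^m are represented as complex lists of length m (coordinate i+1 is xs ! i).\<close>

definition esym :: "nat \<Rightarrow> complex list \<Rightarrow> complex" where
  "esym k z = (\<Sum>S\<in>{S. S \<subseteq> {0..<length z} \<and> card S = k}. \<Prod>i\<in>S. z ! i)"

definition sym_map :: "nat \<Rightarrow> complex list \<Rightarrow> complex list" where
  "sym_map m z = map (\<lambda>k. esym k z) [1..<m] @ [prod_list z]"

definition symm_polydisc :: "nat \<Rightarrow> complex list set" where
  "symm_polydisc m = {sym_map m z | z. length z = m \<and> (\<forall>i<m. norm (z ! i) < 1)}"

definition Gtilde :: "nat \<Rightarrow> complex list set" where
  "Gtilde n = {x. length x = n \<and> norm (x ! (n - 1)) < 1 \<and>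
     (\<exists>\<beta> :: nat \<Rightarrow> complex.
        \<forall>j\<in>{1..n-1}. x ! (j - 1) = \<beta> j + cnj (\<beta> (n - j)) * x ! (n - 1)
                     \<and> norm (\<beta> j) + norm (\<beta> (n - j)) < real (n choose j))}"

end

theory Submission
  imports Defs "HOL-Computational_Algebra.Fundamental_Theorem_Algebra"
begin

text \<open>
  By Vieta's formulas, a point (s_1, ..., s_{m-1}, p) lies in G_m iff all roots of
  P(x) = sum_j (-1)^j s_j x^(m-j), where s_0 = 1 and s_m = p, lie in the unit disc.
  If they do, then the reflected polynomial P*(x) = x^m conj (P (1 / conj x)) satisfies
  |P*| <= |P| outside the disc, factor by factor. The polynomial P_Q of the point Q satisfies
  the Schur-Cohn identities P - (-1)^n p P* = (1 - |p|^2) x P_Q and P = x P_Q + (-1)^n p P_Q*,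
  and when |p| < 1 either one transfers "all roots in the disc" between P and P_Q.
  Both sides of the equivalence force |p| < 1. Finally s_j = Q_j + conj Q_(n-j) p, and the
  coordinates of a point Q of G_(n-1) satisfy |Q_j| < (n-1 choose j), so by Pascal's rule
  beta_j = Q_j witnesses membership in the tilde domain.
\<close>

definition sym_coeff :: "complex list \<Rightarrow> nat \<Rightarrow> complex" where
  "sym_coeff w j = (if j = 0 then 1 else w ! (j - 1))"

definition sym_poly :: "nat \<Rightarrow> (nat \<Rightarrow> complex) \<Rightarrow> complex poly" where
  "sym_poly m a = (\<Sum>j\<le>m. monom ((-1)^j * a j) (m - j))"

definition sym_poly_star :: "nat \<Rightarrow> (nat \<Rightarrow> complex) \<Rightarrow> complex poly" where
  "sym_poly_star m a = (\<Sum>j\<le>m. monom ((-1)^j * cnj (a j)) j)"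

lemma coeff_sym_poly: "coeff (sym_poly m a) k = (if k \<le> m then (-1)^(m - k) * a (m - k) else 0)"
proof -
  have "coeff (sym_poly m a) k = (\<Sum>j\<le>m. if j = m - k \<and> k \<le> m then (-1)^j * a j else 0)"
    unfolding sym_poly_def coeff_sum coeff_monom by (rule sum.cong) auto
  then show ?thesis
    by (cases "k \<le> m") (simp_all add: sum.delta')
qed

lemma coeff_sym_poly_star: "coeff (sym_poly_star m a) k = (if k \<le> m then (-1)^k * cnj (a k) else 0)"
  unfolding sym_poly_star_def coeff_sum coeff_monom
  by (simp add: sum.delta' eq_commute[of _ k])

lemma sym_poly_cong: "(\<And>j. j \<le> m \<Longrightarrow> a j = b j) \<Longrightarrow> sym_poly m a = sym_poly m b"
  unfolding sym_poly_def by (rule sum.cong) auto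

lemma sym_poly_eqD:
  assumes "sym_poly m a = sym_poly m b" "j \<le> m"
  shows "a j = b j"
proof -
  have "coeff (sym_poly m a) (m - j) = coeff (sym_poly m b) (m - j)"
    using assms(1) by simp
  then show ?thesis
    using assms(2) by (simp add: coeff_sym_poly)
qed

lemma degree_sym_poly:
  assumes "a 0 = 1"
  shows "degree (sym_poly m a) = m"
proof (rule antisym)
  show "degree (sym_poly m a) \<le> m"
    by (rule degree_le) (simp add: coeff_sym_poly)
  show "m \<le> degree (sym_poly m a)"
    using assms by (intro le_degree) (simp add: coeff_sym_poly)
qed

lemma poly_sym_poly_star:
  "x \<noteq> 0 \<Longrightarrow> poly (sym_poly_star m a) x = x^m * cnj (poly (sym_poly m a) (1 / cnj x))"
  unfolding sym_poly_star_def sym_poly_def poly_sum poly_monom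
  by (simp add: sum_distrib_left power_diff field_simps)

lemma coeff_prod_linear_factors:
  fixes r :: "nat \<Rightarrow> 'a::comm_ring_1"
  shows "coeff (\<Prod>i<m. [:- r i, 1:]) k = (if k \<le> m then (-1)^(m - k) *
      (\<Sum>S | S \<subseteq> {0..<m} \<and> card S = m - k. \<Prod>i\<in>S. r i) else 0)"
proof -
  let ?A = "{0..<m}"
  let ?c = "\<lambda>X. (-1)^card X * (\<Prod>i\<in>X. r i)"
  have summand: "(\<Prod>i\<in>X. [:- r i:]) * (\<Prod>i\<in>?A - X. [:0, 1:]) = monom (?c X) (m - card X)"
    if "X \<subseteq> ?A" for X
    using that finite_subset[OF that]
    by (simp add: prod_to_poly prod_uminus card_Diff_subset monom_altdef)
  have "(\<Prod>i<m. [:- r i, 1:]) = (\<Prod>i\<in>?A. [:- r i:] + [:0, 1:])"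
    by (rule prod.cong) auto
  also have "\<dots> = (\<Sum>X\<in>Pow ?A. (\<Prod>i\<in>X. [:- r i:]) * (\<Prod>i\<in>?A - X. [:0, 1:]))"
    by (rule prod_add) simp
  also have "\<dots> = (\<Sum>X\<in>Pow ?A. monom (?c X) (m - card X))"
    by (rule sum.cong[OF refl], rule summand) simp
  finally have expand: "(\<Prod>i<m. [:- r i, 1:]) = (\<Sum>X\<in>Pow ?A. monom (?c X) (m - card X))" .
  have "coeff (\<Prod>i<m. [:- r i, 1:]) k
      = (\<Sum>X\<in>Pow ?A. if k \<le> m \<and> card X = m - k then ?c X else 0)"
    unfolding expand coeff_sum coeff_monom
    by (intro sum.cong refl) (auto dest: card_mono[OF finite_atLeastLessThan])
  also have "\<dots> = (if k \<le> m then (\<Sum>X | X \<subseteq> ?A \<and> card X = m - k. ?c X) else 0)"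
    by (auto simp: sum.inter_filter[symmetric] Pow_def intro!: sum.cong)
  finally show ?thesis
    by (simp add: sum_distrib_left)
qed

lemma esym_0: "esym 0 z = 1"
proof -
  have "{S. S \<subseteq> {0..<length z} \<and> card S = 0} = {{}}"
    by (auto dest: finite_subset)
  then show ?thesis
    by (simp add: esym_def)
qed

lemma esym_length: "esym (length z) z = prod_list z"
proof -
  have "{S. S \<subseteq> {0..<length z} \<and> card S = length z} = {{0..<length z}}"
    using card_subset_eq[of "{0..<length z}"] by auto
  then show ?thesis
    by (simp add: esym_def prod.list_conv_set_nth)
qed

lemma sym_coeff_sym_map:
  assumes "length z = m" "j \<le> m"
  shows "sym_coeff (sym_map m z) j = esym j z"
  using assms esym_0 esym_length[of z]
  by (cases "j = m") (auto simp: sym_coeff_def sym_map_def nth_append)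

lemma sym_poly_sym_map:
  assumes "length z = m"
  shows "sym_poly m (sym_coeff (sym_map m z)) = (\<Prod>i<m. [:- (z ! i), 1:])"
  by (rule poly_eqI) (simp add: coeff_prod_linear_factors coeff_sym_poly assms sym_coeff_sym_map esym_def)

lemma sym_poly_factor:
  assumes "a 0 = 1"
  obtains r where "sym_poly m a = (\<Prod>i<m. [:- r i, 1:])"
proof -
  obtain r where "smult (lead_coeff (sym_poly m a)) (\<Prod>i<degree (sym_poly m a). [:- r i, 1:])
      = sym_poly m a"
    using complex_poly_decompose' by blast
  moreover have "lead_coeff (sym_poly m a) = 1"
    using assms by (simp add: degree_sym_poly coeff_sym_poly)
  ultimately have "sym_poly m a = (\<Prod>i<m. [:- r i, 1:])"
    using assms by (simp add: degree_sym_poly)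
  then show ?thesis
    by (rule that)
qed

lemma poly_prod_linear_factors_eq_0:
  fixes r :: "nat \<Rightarrow> 'a::idom"
  shows "poly (\<Prod>i<m. [:- r i, 1:]) x = 0 \<longleftrightarrow> (\<exists>i<m. x = r i)"
  by (auto simp: poly_prod)

lemma symm_polydisc_iff_roots:
  assumes "length w = m" "m \<ge> 1"
  shows "w \<in> symm_polydisc m \<longleftrightarrow> {x. poly (sym_poly m (sym_coeff w)) x = 0} \<subseteq> ball 0 1"
proof
  assume "w \<in> symm_polydisc m"
  then obtain z where "w = sym_map m z" "length z = m" "\<forall>i<m. norm (z ! i) < 1"
    unfolding symm_polydisc_def by blast
  then show "{x. poly (sym_poly m (sym_coeff w)) x = 0} \<subseteq> ball 0 1"
    by (auto simp: sym_poly_sym_map poly_prod_linear_factors_eq_0)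
next
  assume roots: "{x. poly (sym_poly m (sym_coeff w)) x = 0} \<subseteq> ball 0 1"
  obtain r where r: "sym_poly m (sym_coeff w) = (\<Prod>i<m. [:- r i, 1:])"
    using sym_poly_factor[of "sym_coeff w"] by (auto simp: sym_coeff_def)
  define z where "z = map r [0..<m]"
  have "length z = m"
    by (simp add: z_def)
  have "norm (z ! i) < 1" if "i < m" for i
    using roots that by (force simp: z_def r poly_prod_linear_factors_eq_0)
  have "sym_poly m (sym_coeff w) = sym_poly m (sym_coeff (sym_map m z))"
    unfolding r sym_poly_sym_map[OF \<open>length z = m\<close>] by (simp add: z_def)
  then have "sym_coeff w (Suc i) = sym_coeff (sym_map m z) (Suc i)" if "i < m" for i
    using that by (intro sym_poly_eqD) auto
  then have "w = sym_map m z"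
    using assms by (intro nth_equalityI) (auto simp: sym_map_def sym_coeff_def)
  then show "w \<in> symm_polydisc m"
    unfolding symm_polydisc_def
    using \<open>length z = m\<close> \<open>\<And>i. i < m \<Longrightarrow> norm (z ! i) < 1\<close> by blast
qed

lemma norm_esym_less:
  assumes "\<forall>i<length z. norm (z ! i) < 1" "1 \<le> j" "j \<le> length z"
  shows "norm (esym j z) < real (length z choose j)"
proof -
  let ?F = "{S. S \<subseteq> {0..<length z} \<and> card S = j}"
  have "?F \<noteq> {}"
    using assms by (intro ex_in_conv[THEN iffD1] exI[of _ "{0..<j}"]) auto
  have "norm (\<Prod>i\<in>S. z ! i) < 1" if "S \<in> ?F" for S
  proof -
    have "S \<noteq> {}" "finite S"
      using that assms(2) finite_subset by auto
    then obtain i where "i \<in> S"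
      by blast
    have "(\<Prod>i\<in>S. norm (z ! i)) < (\<Prod>i\<in>S. 1)"
      using \<open>i \<in> S\<close> \<open>finite S\<close> that assms(1)
      by (intro prod_mono_strict) (auto simp: less_imp_le)
    then show ?thesis
      by (simp add: prod_norm)
  qed
  then have "norm (esym j z) < (\<Sum>S\<in>?F. 1)"
    unfolding esym_def
    by (intro le_less_trans[OF norm_sum] sum_strict_mono \<open>?F \<noteq> {}\<close>) auto
  then show ?thesis
    using n_subsets[of "{0..<length z}" j] by simp
qed

lemma symm_polydisc_coeff_bound:
  assumes "w \<in> symm_polydisc m" "1 \<le> j" "j \<le> m"
  shows "norm (sym_coeff w j) < real (m choose j)"
proof -
  obtain z where "w = sym_map m z" "length z = m" "\<forall>i<m. norm (z ! i) < 1"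
    using assms(1) unfolding symm_polydisc_def by blast
  then show ?thesis
    using norm_esym_less[of z j] assms(2,3) by (simp add: sym_coeff_sym_map)
qed

text \<open>\<open>|x - z|\<^sup>2 - |1 - x conj z|\<^sup>2 = (|x|\<^sup>2 - 1) (1 - |z|\<^sup>2)\<close>\<close>

lemma norm_one_minus_mult_cnj_le:
  fixes x z :: complex
  assumes "norm z < 1" "norm x \<ge> 1"
  shows "norm (1 - x * cnj z) \<le> norm (x - z)"
proof -
  have "0 \<le> ((norm x)^2 - 1) * (1 - (norm z)^2)"
    using assms by (intro mult_nonneg_nonneg) (simp_all add: abs_square_le_1 one_le_power)
  then have "(norm (1 - x * cnj z))^2 \<le> (norm (x - z))^2"
    unfolding cmod_power2 by (simp add: power2_eq_square algebra_simps)
  then show ?thesis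
    by (rule power2_le_imp_le) simp
qed

lemma norm_poly_sym_poly_star_le:
  assumes "a 0 = 1" "{x. poly (sym_poly m a) x = 0} \<subseteq> ball 0 1" "norm x \<ge> 1"
  shows "norm (poly (sym_poly_star m a) x) \<le> norm (poly (sym_poly m a) x)"
proof -
  obtain r where r: "sym_poly m a = (\<Prod>i<m. [:- r i, 1:])"
    using sym_poly_factor[of a m] assms(1) by blast
  have r_disc: "norm (r i) < 1" if "i < m" for i
    using assms(2) that by (force simp: r poly_prod_linear_factors_eq_0)
  have "x \<noteq> 0"
    using assms(3) by auto
  have "poly (sym_poly_star m a) x = x ^ m * (\<Prod>i<m. 1 / x - cnj (r i))"
    using poly_sym_poly_star[OF \<open>x \<noteq> 0\<close>] by (simp add: r poly_prod)
  also have "\<dots> = (\<Prod>i<m. x * (1 / x - cnj (r i)))"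
    by (simp add: prod.distrib)
  also have "\<dots> = (\<Prod>i<m. 1 - x * cnj (r i))"
    using \<open>x \<noteq> 0\<close> by (simp add: right_diff_distrib)
  finally have "norm (poly (sym_poly_star m a) x) = (\<Prod>i<m. norm (1 - x * cnj (r i)))"
    by (simp add: prod_norm)
  also have "\<dots> \<le> (\<Prod>i<m. norm (x - r i))"
    using r_disc assms(3) by (intro prod_mono) (simp add: norm_one_minus_mult_cnj_le)
  also have "\<dots> = norm (poly (sym_poly m a) x)"
    by (simp add: r poly_prod prod_norm)
  finally show ?thesis .
qed

definition schur_coeff :: "nat \<Rightarrow> (nat \<Rightarrow> complex) \<Rightarrow> nat \<Rightarrow> complex" where
  "schur_coeff n a j = (a j - cnj (a (n - j)) * a n) / of_real (1 - (norm (a n))^2)"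

lemma minus_one_power_mult_diff:
  "k \<le> n \<Longrightarrow> (-1::'a::ring_1)^n * (-1)^k = (-1)^(n - k)"
  by (simp add: neg_one_power_add_eq_neg_one_power_diff flip: power_add)

lemma one_minus_mult_cnj_neq_0:
  assumes "norm z \<noteq> 1"
  shows "1 - z * cnj z \<noteq> 0"
proof -
  have "(norm z)^2 \<noteq> 1"
    using assms by (simp add: abs_square_eq_1)
  then have "of_real ((norm z)^2) \<noteq> (1::complex)"
    by (metis of_real_1 of_real_eq_iff)
  then show ?thesis
    unfolding complex_norm_square by simp
qed

lemma schur_coeff_eq:
  "schur_coeff n a j = (a j - cnj (a (n - j)) * a n) / (1 - a n * cnj (a n))"
  unfolding schur_coeff_def of_real_diff of_real_1 complex_norm_square ..

lemma schur_coeff_0: "norm (a n) \<noteq> 1 \<Longrightarrow> a 0 = 1 \<Longrightarrow> schur_coeff n a 0 = 1"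
  using one_minus_mult_cnj_neq_0[of "a n"] by (simp add: schur_coeff_eq mult.commute)

lemma schur_coeff_inversion:
  assumes "norm (a n) \<noteq> 1" "j \<le> n"
  shows "schur_coeff n a j + cnj (schur_coeff n a (n - j)) * a n = a j"
proof -
  define d where "d = 1 - a n * cnj (a n)"
  have "d \<noteq> 0"
    using one_minus_mult_cnj_neq_0[OF assms(1)] by (simp add: d_def)
  have "n - (n - j) = j" "cnj d = d"
    using assms(2) by (simp_all add: d_def)
  then have conj: "cnj (schur_coeff n a (n - j)) = (cnj (a (n - j)) - a j * cnj (a n)) / d"
    unfolding schur_coeff_eq d_def[symmetric] by simp
  have "schur_coeff n a j + cnj (schur_coeff n a (n - j)) * a n
      = (a j - cnj (a (n - j)) * a n + (cnj (a (n - j)) - a j * cnj (a n)) * a n) / d"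
    unfolding conj unfolding schur_coeff_eq d_def[symmetric] using \<open>d \<noteq> 0\<close> by (simp add: field_simps)
  also have "\<dots> = a j * d / d"
    by (simp add: d_def algebra_simps)
  finally show ?thesis
    using \<open>d \<noteq> 0\<close> by simp
qed

lemma sym_poly_minus_star:
  assumes "n \<ge> 1" "a 0 = 1" "norm (a n) \<noteq> 1"
  shows "sym_poly n a - smult ((-1)^n * a n) (sym_poly_star n a)
    = smult (1 - a n * cnj (a n)) (pCons 0 (sym_poly (n - 1) (schur_coeff n a)))"
    (is "?L = smult ?d ?R")
proof (rule poly_eqI)
  fix k
  consider "k = 0" | "1 \<le> k" "k \<le> n" | "n < k"
    by linarith
  then show "coeff ?L k = coeff (smult ?d ?R) k"
  proof cases
    case 1
    then show ?thesis
      using assms(2) by (simp add: coeff_sym_poly coeff_sym_poly_star)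
  next
    case 2
    have "n - (n - k) = k"
      using 2 by simp
    have "coeff ?L k = (-1)^(n - k) * a (n - k) - ((-1)^n * (-1)^k) * (cnj (a k) * a n)"
      using 2 by (simp add: coeff_sym_poly coeff_sym_poly_star mult_ac)
    also have "\<dots> = (-1)^(n - k) * (a (n - k) - cnj (a k) * a n)"
      using 2 by (simp add: minus_one_power_mult_diff right_diff_distrib)
    also have "\<dots> = (-1)^(n - k) * (?d * schur_coeff n a (n - k))"
      using one_minus_mult_cnj_neq_0[OF assms(3)] \<open>n - (n - k) = k\<close>
      by (simp add: schur_coeff_eq)
    also have "\<dots> = coeff (smult ?d ?R) k"
      using 2 by (simp add: coeff_pCons' coeff_sym_poly)
    finally show ?thesis .
  next
    case 3
    then show ?thesis
      using assms(1) by (simp add: coeff_sym_poly coeff_sym_poly_star coeff_pCons')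
  qed
qed

lemma sym_poly_schur_decomp:
  assumes "n \<ge> 1" "a 0 = 1" "norm (a n) \<noteq> 1"
  shows "sym_poly n a = pCons 0 (sym_poly (n - 1) (schur_coeff n a))
    + smult ((-1)^n * a n) (sym_poly_star (n - 1) (schur_coeff n a))" (is "_ = ?R")
proof (rule poly_eqI)
  fix k
  let ?q = "schur_coeff n a"
  consider "k = 0" | "1 \<le> k" "k < n" | "k = n" | "n < k"
    by linarith
  then show "coeff (sym_poly n a) k = coeff ?R k"
  proof cases
    case 1
    then show ?thesis
      using assms by (simp add: coeff_sym_poly coeff_sym_poly_star schur_coeff_0)
  next
    case 2
    then have "k \<le> n - 1" "n - 1 - (k - 1) = n - k"
      by auto
    then have "coeff ?R k = (-1)^(n - k) * ?q (n - k) + ((-1)^n * (-1)^k) * (cnj (?q k) * a n)"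
      using 2 by (simp add: coeff_pCons' coeff_sym_poly coeff_sym_poly_star mult_ac)
    also have "\<dots> = (-1)^(n - k) * (?q (n - k) + cnj (?q (n - (n - k))) * a n)"
      using 2 by (simp add: minus_one_power_mult_diff distrib_left)
    also have "\<dots> = (-1)^(n - k) * a (n - k)"
      using schur_coeff_inversion[of a n "n - k"] assms(3) by simp
    finally show ?thesis
      using 2 by (simp add: coeff_sym_poly)
  next
    case 3
    then show ?thesis
      using assms by (simp add: coeff_sym_poly coeff_sym_poly_star coeff_pCons' schur_coeff_0)
  next
    case 4
    then show ?thesis
      using assms(1) by (auto simp: coeff_sym_poly coeff_sym_poly_star coeff_pCons')
  qed
qed

lemma schur_roots_in_disc_iff:
  assumes "n \<ge> 1" "a 0 = 1" "norm (a n) < 1"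
  shows "{x. poly (sym_poly n a) x = 0} \<subseteq> ball 0 1
    \<longleftrightarrow> {x. poly (sym_poly (n - 1) (schur_coeff n a)) x = 0} \<subseteq> ball 0 1"
proof
  let ?q = "schur_coeff n a"
  define c where "c = (-1)^n * a n"
  have "norm (a n) \<noteq> 1" and norm_c: "norm c = norm (a n)"
    using assms(3) by (simp_all add: c_def norm_mult norm_power)
  show "{x. poly (sym_poly (n - 1) ?q) x = 0} \<subseteq> ball 0 1"
    if roots: "{x. poly (sym_poly n a) x = 0} \<subseteq> ball 0 1"
  proof (intro subsetI, rule ccontr)
    fix x
    assume "x \<in> {x. poly (sym_poly (n - 1) ?q) x = 0}" "x \<notin> ball 0 1"
    then have "poly (sym_poly (n - 1) ?q) x = 0" "norm x \<ge> 1"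
      by auto
    then have "poly (sym_poly n a) x = c * poly (sym_poly_star n a) x"
      using arg_cong[OF sym_poly_minus_star[OF assms(1,2) \<open>norm (a n) \<noteq> 1\<close>], of "\<lambda>P. poly P x"]
      by (simp add: c_def)
    then have "norm (poly (sym_poly n a) x) = norm (a n) * norm (poly (sym_poly_star n a) x)"
      by (simp only: norm_mult norm_c)
    also have "\<dots> \<le> norm (a n) * norm (poly (sym_poly n a) x)"
      using norm_poly_sym_poly_star_le[OF assms(2) roots \<open>norm x \<ge> 1\<close>]
      by (rule mult_left_mono) simp
    finally have "(1 - norm (a n)) * norm (poly (sym_poly n a) x) \<le> 0"
      by (simp add: left_diff_distrib)
    then have "poly (sym_poly n a) x = 0"
      using assms(3) by (simp add: mult_le_0_iff)
    then show False
      using roots \<open>norm x \<ge> 1\<close> by auto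
  qed
  show "{x. poly (sym_poly n a) x = 0} \<subseteq> ball 0 1"
    if roots: "{x. poly (sym_poly (n - 1) ?q) x = 0} \<subseteq> ball 0 1"
  proof (intro subsetI, rule ccontr)
    fix x
    assume "x \<in> {x. poly (sym_poly n a) x = 0}" "x \<notin> ball 0 1"
    then have "poly (sym_poly n a) x = 0" "norm x \<ge> 1"
      by auto
    then have "x * poly (sym_poly (n - 1) ?q) x = - (c * poly (sym_poly_star (n - 1) ?q) x)"
      using arg_cong[OF sym_poly_schur_decomp[OF assms(1,2) \<open>norm (a n) \<noteq> 1\<close>], of "\<lambda>P. poly P x"]
      by (simp add: c_def eq_neg_iff_add_eq_0)
    then have "norm (x * poly (sym_poly (n - 1) ?q) x) = norm (c * poly (sym_poly_star (n - 1) ?q) x)"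
      by (simp only: norm_minus_cancel)
    then have "norm x * norm (poly (sym_poly (n - 1) ?q) x)
        = norm (a n) * norm (poly (sym_poly_star (n - 1) ?q) x)"
      by (simp only: norm_mult norm_c)
    also have "\<dots> \<le> norm (a n) * norm (poly (sym_poly (n - 1) ?q) x)"
      using norm_poly_sym_poly_star_le[OF schur_coeff_0[OF \<open>norm (a n) \<noteq> 1\<close> assms(2)] roots
          \<open>norm x \<ge> 1\<close>]
      by (rule mult_left_mono) simp
    finally have "(norm x - norm (a n)) * norm (poly (sym_poly (n - 1) ?q) x) \<le> 0"
      by (simp add: left_diff_distrib)
    then have "poly (sym_poly (n - 1) ?q) x = 0"
      using assms(3) \<open>norm x \<ge> 1\<close> by (simp add: mult_le_0_iff)
    then show False
      using roots \<open>norm x \<ge> 1\<close> by auto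
  qed
qed

lemma Gtilde_if_schur_coeff_bound:
  assumes "length w = n" "n \<ge> 1" "norm (sym_coeff w n) < 1"
    and bound: "\<And>j. 1 \<le> j \<Longrightarrow> j \<le> n - 1
      \<Longrightarrow> norm (schur_coeff n (sym_coeff w) j) < real ((n - 1) choose j)"
  shows "w \<in> Gtilde n"
  unfolding Gtilde_def
proof (intro CollectI conjI exI[of _ "schur_coeff n (sym_coeff w)"] ballI)
  let ?e = "sym_coeff w"
  let ?q = "schur_coeff n ?e"
  have last: "w ! (n - 1) = ?e n"
    using assms(2) by (simp add: sym_coeff_def)
  then show "length w = n" "norm (w ! (n - 1)) < 1"
    using assms(1,3) by simp_all
  fix j
  assume j: "j \<in> {1..n - 1}"
  have "norm (?e n) \<noteq> 1"
    using assms(3) by simp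
  moreover have "j \<le> n"
    using j by auto
  ultimately have "?q j + cnj (?q (n - j)) * ?e n = ?e j"
    by (rule schur_coeff_inversion)
  then show "w ! (j - 1) = ?q j + cnj (?q (n - j)) * w ! (n - 1)"
    using j unfolding last by (auto simp: sym_coeff_def)
  have "(n - 1) choose (n - j) = (n - 1) choose (j - 1)"
    using j by (subst binomial_symmetric) (auto simp: Suc_diff_Suc)
  moreover have "n choose j = ((n - 1) choose (j - 1)) + ((n - 1) choose j)"
    using j binomial_Suc_Suc[of "n - 1" "j - 1"] assms(2) by auto
  moreover have "norm (?q j) + norm (?q (n - j)) < real ((n - 1) choose j) + real ((n - 1) choose (n - j))"
    using j by (intro add_strict_mono bound) auto
  ultimately show "norm (?q j) + norm (?q (n - j)) < real (n choose j)"
    by simp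
qed

lemma symm_polydisc_iff_schur:
  assumes "length w = n" "n \<ge> 2" "length Q = n - 1" "norm (sym_coeff w n) < 1"
    and Q: "\<And>j. j \<le> n - 1 \<Longrightarrow> sym_coeff Q j = schur_coeff n (sym_coeff w) j"
  shows "w \<in> symm_polydisc n \<longleftrightarrow> Q \<in> symm_polydisc (n - 1)"
proof -
  have "w \<in> symm_polydisc n \<longleftrightarrow> {x. poly (sym_poly n (sym_coeff w)) x = 0} \<subseteq> ball 0 1"
    using assms(1,2) by (intro symm_polydisc_iff_roots) auto
  also have "\<dots> \<longleftrightarrow> {x. poly (sym_poly (n - 1) (schur_coeff n (sym_coeff w))) x = 0} \<subseteq> ball 0 1"
    using assms(2,4) by (intro schur_roots_in_disc_iff) (auto simp: sym_coeff_def)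
  also have "\<dots> \<longleftrightarrow> Q \<in> symm_polydisc (n - 1)"
    using symm_polydisc_iff_roots[of Q "n - 1"] assms(2,3) sym_poly_cong[OF Q] by simp
  finally show ?thesis .
qed

lemma sym_coeff_schur_point:
  assumes "n \<ge> 1" "length s = n - 1" "norm p \<noteq> 1" "j \<le> n - 1"
  shows "sym_coeff (map (\<lambda>j. (s ! (j - 1) - cnj (s ! (n - j - 1)) * p)
      / complex_of_real (1 - (norm p)^2)) [1..<n]) j = schur_coeff n (sym_coeff (s @ [p])) j"
proof -
  let ?e = "sym_coeff (s @ [p])"
  have e_0: "?e 0 = 1" and e_n: "?e n = p"
    using assms(1,2) by (simp_all add: sym_coeff_def nth_append)
  show ?thesis
  proof (cases "j = 0")
    case True
    have "norm (?e n) \<noteq> 1"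
      using assms(3) e_n by simp
    with True e_0 show ?thesis
      by (simp add: schur_coeff_0 sym_coeff_def)
  next
    case False
    then show ?thesis
      using assms e_n by (simp add: sym_coeff_def schur_coeff_def nth_append)
  qed
qed

theorem mainTheorem7:
  fixes n :: nat and s :: "complex list" and p :: complex
  assumes "n \<ge> 2" and "length s = n - 1" and "norm p \<noteq> 1"
  shows "s @ [p] \<in> symm_polydisc n \<longleftrightarrow>
    (s @ [p] \<in> Gtilde n \<and>
     map (\<lambda>j. (s ! (j - 1) - cnj (s ! (n - j - 1)) * p) / complex_of_real (1 - (norm p)^2)) [1..<n]
       \<in> symm_polydisc (n - 1))"
proof -
  define w where "w = s @ [p]"
  define Q where "Q = map (\<lambda>j. (s ! (j - 1) - cnj (s ! (n - j - 1)) * p) / complex_of_real (1 - (norm p)^2)) [1..<n]"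
  have n: "n \<ge> 1" "n - 1 \<ge> 1" and len: "length w = n" "length Q = n - 1"
    and p: "sym_coeff w n = p"
    using assms(1,2) by (simp_all add: w_def Q_def sym_coeff_def nth_append)
  have Q_schur: "sym_coeff Q j = schur_coeff n (sym_coeff w) j" if "j \<le> n - 1" for j
    unfolding Q_def w_def using sym_coeff_schur_point n(1) assms(2,3) that .
  have "norm p < 1" if "w \<in> symm_polydisc n"
    using symm_polydisc_coeff_bound[OF that, of n] n p by simp
  moreover have "norm p < 1" if "w \<in> Gtilde n"
    using that assms(1,2) by (simp add: Gtilde_def w_def nth_append)
  moreover have "w \<in> symm_polydisc n \<longleftrightarrow> Q \<in> symm_polydisc (n - 1)" if "norm p < 1"
    using that assms(1) by (intro symm_polydisc_iff_schur len Q_schur) (simp_all add: p)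
  moreover have "w \<in> Gtilde n" if "Q \<in> symm_polydisc (n - 1)" "norm p < 1"
    using that symm_polydisc_coeff_bound[OF that(1)]
    by (intro Gtilde_if_schur_coeff_bound len n) (simp_all add: p flip: Q_schur)
  ultimately show ?thesis
    unfolding w_def[symmetric] Q_def[symmetric] by blast
qed

end
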